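(* For every $\varepsilon>0$ and every $1<p<\infty$, letting $q$ satisfy $1/p+1/q=1$, there exist $N\in\mathbb{N}$ and positive numbers $a_1\ge a_2\ge\dots\ge a_N>0$ such that $$\sum_{n=1}^N a_n>\varepsilon^{-2}\qquad\text{and}\qquad \sum_{n=1}^N\Big(\sum_{j=n}^N a_j^q\Big)^{p/q}<\varepsilon^p.$$ *)

theory Defs
  imports "HOL-Analysis.Analysis"
begin

end

theory Submission
  imports Defs
begin

text \<open>Take the harmonic weights \<open>a\<^sub>j = c / j\<close> with \<open>c = M / H\<^sub>N\<close>, where \<open>H\<^sub>N\<close> is the
  \<open>N\<close>-th harmonic number and \<open>M > \<epsilon>\<^sup>-\<^sup>2\<close>, so that \<open>\<Sum> a\<^sub>n = M\<close>. Comparing with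
  \<open>\<integral> t\<^sup>-\<^sup>q dt\<close>, the tail \<open>\<Sum>\<^sub>j\<^sub>\<ge>\<^sub>n a\<^sub>j\<^sup>q\<close> is at most \<open>p c\<^sup>q n\<^sup>1\<^sup>-\<^sup>q\<close>, and since
  \<open>(1 - q) p / q = -1\<close> its \<open>p/q\<close>-th power is \<open>O(c\<^sup>p / n)\<close>. Summing over \<open>n\<close> gives
  \<open>O(c\<^sup>p H\<^sub>N) = O(M\<^sup>p / H\<^sub>N\<^sup>p\<^sup>-\<^sup>1)\<close>, which is small because \<open>H\<^sub>N\<close> diverges.\<close>

lemma powr_neg_le_diff_quotient:
  fixes q x :: real
  assumes q: "q > 1" and x: "x > 0"
  shows "(x + 1) powr (-q) \<le> (x powr (1 - q) - (x + 1) powr (1 - q)) / (q - 1)"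
proof -
  have deriv: "((\<lambda>t. t powr (1 - q)) has_real_derivative (1 - q) * t powr (1 - q - 1)) (at t)"
    if "x \<le> t" for t
    using that x by (intro has_real_derivative_powr) auto
  obtain z where z: "x < z" "z < x + 1"
    and mvt: "(x + 1) powr (1 - q) - x powr (1 - q) = (x + 1 - x) * ((1 - q) * z powr (1 - q - 1))"
    using MVT2[of x "x + 1" "\<lambda>t. t powr (1 - q)" "\<lambda>t. (1 - q) * t powr (1 - q - 1)"] deriv
    by auto
  have "(x + 1) powr (-q) \<le> z powr (-q)"
    using z x q by (intro powr_mono2') auto
  also have "z powr (-q) = (x powr (1 - q) - (x + 1) powr (1 - q)) / (q - 1)"
    using mvt q by (simp add: divide_simps algebra_simps)
  finally show ?thesis .
qed

lemma sum_powr_neg_le: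
  fixes q :: real
  assumes q: "q > 1" and n: "1 \<le> n" "n \<le> N"
  shows "(\<Sum>j=n..N. real j powr (-q)) \<le> q / (q - 1) * real n powr (1 - q)"
proof -
  have telescoped: "(\<Sum>j=n..N. real j powr (-q))
      \<le> real n powr (-q) + (real n powr (1 - q) - real N powr (1 - q)) / (q - 1)"
    using \<open>n \<le> N\<close>
  proof (induction N rule: dec_induct)
    case (step m)
    have "(\<Sum>j=n..Suc m. real j powr (-q)) = (\<Sum>j=n..m. real j powr (-q)) + (real m + 1) powr (-q)"
      using step by (simp add: add.commute)
    also have "\<dots> \<le> real n powr (-q) + (real n powr (1 - q) - real m powr (1 - q)) / (q - 1)
        + (real m powr (1 - q) - (real m + 1) powr (1 - q)) / (q - 1)"
      using step.IH powr_neg_le_diff_quotient[OF q, of "real m"] step n by auto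
    also have "\<dots> = real n powr (-q) + (real n powr (1 - q) - real (Suc m) powr (1 - q)) / (q - 1)"
      by (simp add: add_divide_distrib[symmetric] add.commute)
    finally show ?case .
  qed simp
  have "real n powr (-q) \<le> real n powr (1 - q)"
    using n by (intro powr_mono) auto
  moreover have "0 \<le> real N powr (1 - q) / (q - 1)"
    using q by auto
  ultimately have "(\<Sum>j=n..N. real j powr (-q)) \<le> real n powr (1 - q) + real n powr (1 - q) / (q - 1)"
    using telescoped by (simp add: diff_divide_distrib)
  also have "\<dots> = q / (q - 1) * real n powr (1 - q)"
    using q by (simp add: field_simps)
  finally show ?thesis .
qed

lemma harmonic_tail_powr_le:
  fixes c p q :: real
  assumes q: "q > 1" and p: "p = q / (q - 1)" and c: "c \<ge> 0" and n: "1 \<le> n" "n \<le> N"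
  shows "(\<Sum>j=n..N. (c / real j) powr q) powr (p / q) \<le> c powr p * p powr (p / q) / real n"
proof -
  have "p > 0"
    using p q by simp
  have "(\<Sum>j=n..N. (c / real j) powr q) = c powr q * (\<Sum>j=n..N. real j powr (-q))"
    using n by (simp add: sum_distrib_left powr_divide powr_minus_divide)
  also have "\<dots> \<le> c powr q * (p * real n powr (1 - q))"
    using sum_powr_neg_le[OF q n] p by (intro mult_left_mono) auto
  finally have "(\<Sum>j=n..N. (c / real j) powr q) powr (p / q)
      \<le> (c powr q * (p * real n powr (1 - q))) powr (p / q)"
    using p q by (intro powr_mono2) (auto intro!: sum_nonneg)
  also have "\<dots> = (c powr q) powr (p / q) * p powr (p / q) * (real n powr (1 - q)) powr (p / q)"
    using c \<open>p > 0\<close> by (simp add: powr_mult)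
  also have "(c powr q) powr (p / q) = c powr p"
    using q by (simp add: powr_powr)
  also have "(real n powr (1 - q)) powr (p / q) = 1 / real n"
  proof -
    have "(1 - q) * (p / q) = -1"
      using p q by (simp add: field_simps)
    then show ?thesis
      by (simp add: powr_powr powr_minus divide_inverse)
  qed
  finally show ?thesis by simp
qed

lemma sum_harmonic_tails_powr_le:
  fixes c p q :: real
  assumes "q > 1" and "p = q / (q - 1)" and "c \<ge> 0"
  shows "(\<Sum>n=1..N. (\<Sum>j=n..N. (c / real j) powr q) powr (p / q)) \<le> c powr p * p powr (p / q) * harm N"
proof -
  have "(\<Sum>n=1..N. (\<Sum>j=n..N. (c / real j) powr q) powr (p / q))
      \<le> (\<Sum>n=1..N. c powr p * p powr (p / q) / real n)"
    using harmonic_tail_powr_le[OF assms] by (intro sum_mono) auto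
  also have "\<dots> = c powr p * p powr (p / q) * harm N"
    by (simp add: harm_def sum_distrib_left divide_inverse)
  finally show ?thesis .
qed

lemma eventually_harm_powr_gt:
  fixes r B :: real
  assumes "r > 0" and "B > 0"
  shows "eventually (\<lambda>N. harm N powr r > B) sequentially"
proof -
  have "eventually (\<lambda>N. harm N > B powr (1 / r)) sequentially"
    using harm_at_top by (simp add: filterlim_at_top_dense)
  then show ?thesis
  proof eventually_elim
    case (elim N)
    then have "(B powr (1 / r)) powr r < harm N powr r"
      using assms by (intro powr_less_mono2) auto
    then show ?case
      using assms by (simp add: powr_powr)
  qed
qed

lemma conjugate_exponent:
  fixes p q :: real
  assumes "1 < p" and "1 / p + 1 / q = 1"
  shows "q > 1" and "p = q / (q - 1)"
proof -
  have "1 / q = (p - 1) / p"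
    using assms by (simp add: field_simps)
  then have q: "q = p / (p - 1)"
    by (metis divide_divide_eq_right divide_self_if mult_1 nonzero_divide_eq_eq)
  have q1: "q - 1 = 1 / (p - 1)"
    unfolding q using \<open>1 < p\<close> by (simp add: field_simps)
  then show "q > 1"
    using \<open>1 < p\<close> by (metis diff_gt_0_iff_gt divide_pos_pos zero_less_one)
  show "p = q / (q - 1)"
    unfolding q1 unfolding q using \<open>1 < p\<close> by simp
qed

lemma sum_normalized_harmonic_tails_powr_le:
  fixes M p q :: real
  assumes "q > 1" and "p = q / (q - 1)" and "M > 0" and "N \<ge> 1"
  defines "c \<equiv> M / harm N"
  shows "(\<Sum>n=1..N. (\<Sum>j=n..N. (c / real j) powr q) powr (p / q))
           \<le> M powr p * p powr (p / q) / harm N powr (p - 1)"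
proof -
  have "harm N > (0::real)"
    using \<open>N \<ge> 1\<close> by (intro harm_pos) simp
  then have "harm N powr p > (0::real)"
    by (metis powr_gt_zero less_irrefl)
  moreover have "c \<ge> 0"
    using \<open>M > 0\<close> by (simp add: c_def harm_nonneg)
  ultimately show ?thesis
    using sum_harmonic_tails_powr_le[OF \<open>q > 1\<close> \<open>p = q / (q - 1)\<close> \<open>c \<ge> 0\<close>, of N] \<open>M > 0\<close>
    by (simp add: c_def powr_divide powr_diff field_simps)
qed

theorem lemma3p1:
  fixes \<epsilon> p q :: real
  assumes "\<epsilon> > 0" and "1 < p" and "1 / p + 1 / q = 1"
  shows "\<exists>(N::nat) (a::nat \<Rightarrow> real).
           (\<forall>n\<in>{1..N}. a n > 0) \<and>
           (\<forall>n m. 1 \<le> n \<and> n \<le> m \<and> m \<le> N \<longrightarrow> a m \<le> a n) \<and>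
           (\<Sum>n=1..N. a n) > 1 / \<epsilon>\<^sup>2 \<and>
           (\<Sum>n=1..N. (\<Sum>j=n..N. a j powr q) powr (p / q)) < \<epsilon> powr p"
proof -
  have "q > 1" and p: "p = q / (q - 1)"
    using conjugate_exponent[OF \<open>1 < p\<close> \<open>1 / p + 1 / q = 1\<close>] by simp_all
  define M where "M = 2 / \<epsilon>\<^sup>2"
  define K where "K = p powr (p / q)"
  have "M > 0" "K > 0" "M > 1 / \<epsilon>\<^sup>2"
    using assms by (simp_all add: M_def K_def divide_strict_right_mono)
  have "eventually (\<lambda>N. N \<ge> 1 \<and> harm N powr (p - 1) > M powr p * K / \<epsilon> powr p) sequentially"
    using eventually_harm_powr_gt \<open>M > 0\<close> \<open>K > 0\<close> assms
    by (intro eventually_conj eventually_ge_at_top) auto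
  then obtain N where "N \<ge> 1" and large: "harm N powr (p - 1) > M powr p * K / \<epsilon> powr p"
    by (auto simp: eventually_sequentially)
  define c where "c = M / harm N"
  have "harm N > (0::real)"
    using \<open>N \<ge> 1\<close> by (intro harm_pos) simp
  then have "harm N powr (p - 1) > 0" and "c > 0"
    using \<open>M > 0\<close> by (metis powr_gt_zero less_irrefl, simp add: c_def)
  have "(\<Sum>n=1..N. (\<Sum>j=n..N. (c / real j) powr q) powr (p / q)) \<le> M powr p * K / harm N powr (p - 1)"
    unfolding c_def K_def using sum_normalized_harmonic_tails_powr_le \<open>q > 1\<close> p \<open>M > 0\<close> \<open>N \<ge> 1\<close> .
  also have "\<dots> < M powr p * K / (M powr p * K / \<epsilon> powr p)"
    using large \<open>harm N powr (p - 1) > 0\<close> \<open>M > 0\<close> \<open>K > 0\<close> \<open>\<epsilon> > 0\<close>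
    by (intro divide_strict_left_mono) simp_all
  also have "\<dots> = \<epsilon> powr p"
    using \<open>M > 0\<close> \<open>K > 0\<close> by simp
  finally have tails: "(\<Sum>n=1..N. (\<Sum>j=n..N. (c / real j) powr q) powr (p / q)) < \<epsilon> powr p" .
  have "(\<Sum>n=1..N. c / real n) = c * harm N"
    by (simp add: harm_def sum_distrib_left divide_inverse)
  also have "\<dots> = M"
    using \<open>harm N > 0\<close> by (simp add: c_def less_imp_neq[symmetric])
  finally show ?thesis
    using tails \<open>c > 0\<close> \<open>M > 1 / \<epsilon>\<^sup>2\<close>
    by (intro exI[of _ N] exI[of _ "\<lambda>j. c / real j"]) (auto intro!: divide_left_mono)
qed

end
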